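(* Let $\gamma$ be a consistent family of grafts for a tree $\mathcal T$ and $\mathcal H=\mathrm{hybr}(\mathcal T,\gamma)$ (a tree). Then: (a) for each node $x$ of $\mathcal H$: $\mathrm{sons}_{\mathcal H}(x)=\mathrm{sons}_{\mathcal G}(x)$ if $x\in\{0_{\mathcal G}\}\cup\mathrm{impl}\,\mathcal G$ for some $\mathcal G\in\gamma$, and $\mathrm{sons}_{\mathcal H}(x)=\mathrm{sons}_{\mathcal T}(x)$ otherwise (i.e. when $x\in\mathrm{supp}(\mathcal T,\gamma)\setminus\{0_{\mathcal G}:\mathcal G\in\gamma\}$); (b) if $x\parallel_{\mathcal H}y$, then there are $x'\le_{\mathcal H}x$ and $y'\le_{\mathcal H}y$ such that either $x',y'\in\mathrm{supp}(\mathcal T,\gamma)$ and $x'\parallel_{\mathcal T}y'$, or for some $\mathcal G\in\gamma$, $x',y'\in\mathrm{nodes}\,\mathcal G$ and $x'\parallel_{\mathcal G}y'$; (c) if $\mathcal T$ has a least node, then $\mathcal H$ has a least node, $0_{\mathcal H}=0_{\mathcal T}$, and $0_{\mathcal H}\in\mathrm{supp}(\mathcal T,\gamma)$; (d) if $\max\mathcal T=\emptyset$ then $\max\mathcal H=\emptyset$; (e) if $\mathcal T$ and every $\mathcal G\in\gamma$ are $\kappa$-branching, then $\mathcal H$ is $\kappa$-branching; (f) if $\mathrm{height}\,\mathcal T\le\omega$ and $\mathrm{height}\,\mathcal G\le\omega$ for all $\mathcal G\in\gamma$, then $\mathrm{height}\,\mathcal H\le\omega$.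
   Context: A tree is a pair $\mathcal T=(Q,<_{\mathcal T})$ with $<_{\mathcal T}$ irreflexive transitive such that each set $\{v:v<_{\mathcal T}x\}$ is well-ordered; $x\parallel_{\mathcal T}y$ means $x,y$ incomparable; $\mathrm{sons}_{\mathcal T}(x)=\{s:x<_{\mathcal T}s$, no $v$ with $x<_{\mathcal T}v<_{\mathcal T}s\}$; $\max\mathcal T$ = maximal nodes; $0_{\mathcal T}$ = least node; $\kappa$-branching: every non-maximal node has exactly $\kappa$ sons; height of a node = order type of its predecessors, height of the tree = least $\beta$ such that no node has height $\beta$; $A{\downarrow}_{\mathcal T}=\{v:\exists a\in A\ a\le_{\mathcal T}v\}$; for an antichain $A$ and $x\in A{\downarrow}_{\mathcal T}$, $\mathrm{root}_{\mathcal T}(x,A)$ is the unique $r\in A$ with $r\le_{\mathcal T}x$. A graft for $\mathcal T$ is a tree $\mathcal G$ with more than one node, with a least node $0_{\mathcal G}\in\mathrm{nodes}\,\mathcal T$, such that $\max\mathcal G\subseteq\{v\in\mathrm{nodes}\,\mathcal T:v>_{\mathcal T}0_{\mathcal G}\}$, $\max\mathcal G$ is an antichain in $\mathcal T$, and $\mathrm{impl}\,\mathcal G:=\mathrm{nodes}\,\mathcal G\setminus(\{0_{\mathcal G}\}\cup\max\mathcal G)$ is disjoint from $\mathrm{nodes}\,\mathcal T$. $\mathrm{expl}(\mathcal T,\mathcal G)=\{v:v>_{\mathcal T}0_{\mathcal G}\}\setminus(\max\mathcal G){\downarrow}_{\mathcal T}$. $\gamma$ is a consistent family of grafts for $\mathcal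 T$ if its members are grafts for $\mathcal T$ with pairwise disjoint implants and for distinct $\mathcal D,\mathcal E\in\gamma$: $0_{\mathcal D}\parallel_{\mathcal T}0_{\mathcal E}$, or $0_{\mathcal D}\in(\max\mathcal E){\downarrow}_{\mathcal T}$, or $0_{\mathcal E}\in(\max\mathcal D){\downarrow}_{\mathcal T}$. $\mathrm{supp}(\mathcal T,\gamma)=\mathrm{nodes}\,\mathcal T\setminus\bigcup_{\mathcal G\in\gamma}\mathrm{expl}(\mathcal T,\mathcal G)$. $\mathrm{hybr}(\mathcal T,\gamma)=(H,<)$ with $H=\mathrm{supp}(\mathcal T,\gamma)\cup\bigcup_{\mathcal G\in\gamma}\mathrm{impl}\,\mathcal G$ and $x<y$ iff: (b1) $x,y\in\mathrm{supp}$, $x<_{\mathcal T}y$; or (b2) $x,y\in\mathrm{impl}\,\mathcal G$, $x<_{\mathcal G}y$ for some $\mathcal G\in\gamma$; or (b3) $x\in\mathrm{supp}$, $y\in\mathrm{impl}\,\mathcal G$, $x\le_{\mathcal T}0_{\mathcal G}$ for some $\mathcal G$; or (b4) $x\in\mathrm{impl}\,\mathcal G$, $y\in\mathrm{supp}\cap(\max\mathcal G){\downarrow}_{\mathcal T}$, $x<_{\mathcal G}\mathrm{root}_{\mathcal T}(y,\max\mathcal G)$ for some $\mathcal G$; or (b5) $x\in\mathrm{impl}\,\mathcal D$, $y\in\mathrm{impl}\,\mathcal E$, $0_{\mathcal E}\in(\max\mathcal D){\downarrow}_{\mathcal T}$, $x<_{\mathcal D}\mathrm{root}_{\mathcal T}(0_{\mathcal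 E},\max\mathcal D)$ for some distinct $\mathcal D,\mathcal E\in\gamma$. This $\mathrm{hybr}(\mathcal T,\gamma)$ is a tree. *)

theory Defs
  imports Main "HOL-Library.Equipollence"
begin

type_synonym 'a tree = "'a set \<times> 'a rel"

definition nodes :: "'a tree \<Rightarrow> 'a set" where "nodes T = fst T"
definition lt :: "'a tree \<Rightarrow> 'a \<Rightarrow> 'a \<Rightarrow> bool" where "lt T x y \<longleftrightarrow> (x, y) \<in> snd T"
definition le :: "'a tree \<Rightarrow> 'a \<Rightarrow> 'a \<Rightarrow> bool" where "le T x y \<longleftrightarrow> x = y \<or> lt T x y"

definition preds :: "'a tree \<Rightarrow> 'a \<Rightarrow> 'a set" where "preds T x = {v. lt T v x}"

definition is_tree :: "'a tree \<Rightarrow> bool" where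
  "is_tree T \<longleftrightarrow> snd T \<subseteq> nodes T \<times> nodes T
     \<and> (\<forall>x. \<not> lt T x x)
     \<and> (\<forall>x y z. lt T x y \<longrightarrow> lt T y z \<longrightarrow> lt T x z)
     \<and> (\<forall>x \<in> nodes T. (\<forall>u \<in> preds T x. \<forall>v \<in> preds T x. u = v \<or> lt T u v \<or> lt T v u)
                         \<and> wf (snd T \<inter> (preds T x \<times> preds T x)))"

definition par :: "'a tree \<Rightarrow> 'a \<Rightarrow> 'a \<Rightarrow> bool" where
  "par T x y \<longleftrightarrow> x \<in> nodes T \<and> y \<in> nodes T \<and> \<not> le T x y \<and> \<not> le T y x"

definition sons :: "'a tree \<Rightarrow> 'a \<Rightarrow> 'a set" where
  "sons T x = {s. lt T x s \<and> \<not> (\<exists>v. lt T x v \<and> lt T v s)}"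

definition maxnodes :: "'a tree \<Rightarrow> 'a set" where
  "maxnodes T = {x \<in> nodes T. \<not> (\<exists>y. lt T x y)}"

definition is_least :: "'a tree \<Rightarrow> 'a \<Rightarrow> bool" where
  "is_least T z \<longleftrightarrow> z \<in> nodes T \<and> (\<forall>v \<in> nodes T. le T z v)"

definition zero :: "'a tree \<Rightarrow> 'a" where "zero T = (THE z. is_least T z)"

text \<open>kappa-branching, with the cardinal kappa represented by a set K.\<close>
definition branching :: "'a tree \<Rightarrow> 'k set \<Rightarrow> bool" where
  "branching T K \<longleftrightarrow> (\<forall>x \<in> nodes T - maxnodes T. sons T x \<approx> K)"

text \<open>height of T is at most omega iff every node has height < omega,
  i.e. its (well-ordered) set of predecessors is finite.\<close>
definition height_le_omega :: "'a tree \<Rightarrow> bool" where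
  "height_le_omega T \<longleftrightarrow> (\<forall>x \<in> nodes T. finite (preds T x))"

definition antichain :: "'a tree \<Rightarrow> 'a set \<Rightarrow> bool" where
  "antichain T A \<longleftrightarrow> A \<subseteq> nodes T \<and> (\<forall>a \<in> A. \<forall>b \<in> A. a \<noteq> b \<longrightarrow> par T a b)"

definition down :: "'a tree \<Rightarrow> 'a set \<Rightarrow> 'a set" where
  "down T A = {v. \<exists>a \<in> A. le T a v}"

definition root :: "'a tree \<Rightarrow> 'a \<Rightarrow> 'a set \<Rightarrow> 'a" where
  "root T x A = (THE r. r \<in> A \<and> le T r x)"

definition impl :: "'a tree \<Rightarrow> 'a set" where
  "impl G = nodes G - ({zero G} \<union> maxnodes G)"

definition graft :: "'a tree \<Rightarrow> 'a tree \<Rightarrow> bool" where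
  "graft T G \<longleftrightarrow> is_tree G \<and> (\<exists>a \<in> nodes G. \<exists>b \<in> nodes G. a \<noteq> b)
     \<and> (\<exists>z. is_least G z) \<and> zero G \<in> nodes T
     \<and> maxnodes G \<subseteq> {v \<in> nodes T. lt T (zero G) v}
     \<and> antichain T (maxnodes G)
     \<and> impl G \<inter> nodes T = {}"

definition expl :: "'a tree \<Rightarrow> 'a tree \<Rightarrow> 'a set" where
  "expl T G = {v. lt T (zero G) v} - down T (maxnodes G)"

definition consistent :: "'a tree \<Rightarrow> 'a tree set \<Rightarrow> bool" where
  "consistent T \<gamma> \<longleftrightarrow> (\<forall>G \<in> \<gamma>. graft T G)
     \<and> (\<forall>D \<in> \<gamma>. \<forall>E \<in> \<gamma>. D \<noteq> E \<longrightarrow>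
          impl D \<inter> impl E = {}
          \<and> (par T (zero D) (zero E) \<or> zero D \<in> down T (maxnodes E) \<or> zero E \<in> down T (maxnodes D)))"

definition supp :: "'a tree \<Rightarrow> 'a tree set \<Rightarrow> 'a set" where
  "supp T \<gamma> = nodes T - (\<Union>G \<in> \<gamma>. expl T G)"

definition hybr :: "'a tree \<Rightarrow> 'a tree set \<Rightarrow> 'a tree" where
  "hybr T \<gamma> = (supp T \<gamma> \<union> (\<Union>G \<in> \<gamma>. impl G),
     {(x, y).
        (x \<in> supp T \<gamma> \<and> y \<in> supp T \<gamma> \<and> lt T x y)
      \<or> (\<exists>G \<in> \<gamma>. x \<in> impl G \<and> y \<in> impl G \<and> lt G x y)
      \<or> (\<exists>G \<in> \<gamma>. x \<in> supp T \<gamma> \<and> y \<in> impl G \<and> le T x (zero G))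
      \<or> (\<exists>G \<in> \<gamma>. x \<in> impl G \<and> y \<in> supp T \<gamma> \<and> y \<in> down T (maxnodes G)
                \<and> lt G x (root T y (maxnodes G)))
      \<or> (\<exists>D \<in> \<gamma>. \<exists>E \<in> \<gamma>. D \<noteq> E \<and> x \<in> impl D \<and> y \<in> impl E
                \<and> zero E \<in> down T (maxnodes D) \<and> lt D x (root T (zero E) (maxnodes D)))})"

end

theory Submission
  imports Defs
begin

text \<open>
  Every root and every maximal node of a graft lies in the support; on the support the
  hybrid order is that of \<open>T\<close>, and on the nodes of a graft \<open>G\<close> it is that of \<open>G\<close>.
  Sons are therefore inherited as soon as detours outside the relevant node set can be
  rerouted through it: a path leaving \<open>G\<close> from its root or an implant node passes a maximal
  node of \<open>G\<close> and never returns to \<open>G\<close>, and a path from a non-root support node that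
  leaves the support enters an implant only after the root of that graft.
  Incomparable nodes of different implants are separated using the consistency of the
  family, and the predecessors of a hybrid node consist of its predecessors in \<open>T\<close> and,
  for each of the finitely many (pairwise distinct) roots below it, finitely many
  predecessors inside that graft.
\<close>

lemma tree_lt_nodes:
  assumes "is_tree A" and "lt A x y"
  shows "x \<in> nodes A" and "y \<in> nodes A"
  using assms unfolding is_tree_def lt_def nodes_def by auto

lemma tree_lt_irrefl: "is_tree A \<Longrightarrow> \<not> lt A x x"
  unfolding is_tree_def by auto

lemma tree_lt_trans: "is_tree A \<Longrightarrow> lt A x y \<Longrightarrow> lt A y z \<Longrightarrow> lt A x z"
  unfolding is_tree_def by blast

lemma tree_lt_asym: "is_tree A \<Longrightarrow> lt A x y \<Longrightarrow> \<not> lt A y x"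
  using tree_lt_irrefl tree_lt_trans by metis

lemma tree_le_lt_trans: "is_tree A \<Longrightarrow> le A x y \<Longrightarrow> lt A y z \<Longrightarrow> lt A x z"
  unfolding le_def using tree_lt_trans by metis

lemma tree_lt_le_trans: "is_tree A \<Longrightarrow> lt A x y \<Longrightarrow> le A y z \<Longrightarrow> lt A x z"
  unfolding le_def using tree_lt_trans by metis

lemma tree_preds_linear:
  assumes "is_tree A" and "lt A u x" and "lt A v x"
  shows "u = v \<or> lt A u v \<or> lt A v u"
proof -
  have "x \<in> nodes A" using tree_lt_nodes assms by metis
  then show ?thesis using assms unfolding is_tree_def preds_def by blast
qed

lemma zero_eqI:
  assumes "is_least A z" and "\<And>v. \<not> lt A v z"
  shows "zero A = z"
  unfolding zero_def
proof (rule the_equality)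
  fix z' assume "is_least A z'"
  then have "le A z' z" using assms(1) unfolding is_least_def by blast
  then show "z' = z" using assms(2) unfolding le_def by blast
qed (fact assms(1))

lemma tree_not_lt_least:
  assumes "is_tree A" and "is_least A z"
  shows "\<not> lt A v z"
proof
  assume "lt A v z"
  moreover have "le A z v" using calculation tree_lt_nodes[OF assms(1)] assms(2)
    unfolding is_least_def by blast
  ultimately show False using tree_lt_le_trans[OF assms(1)] tree_lt_irrefl[OF assms(1)] by metis
qed

lemma tree_zero_eq: "is_tree A \<Longrightarrow> is_least A z \<Longrightarrow> zero A = z"
  using zero_eqI tree_not_lt_least by metis

lemma finite_preds: "is_tree A \<Longrightarrow> height_le_omega A \<Longrightarrow> finite (preds A x)"
  unfolding height_le_omega_def preds_def using tree_lt_nodes(2)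
  by (metis (no_types, lifting) Collect_empty_eq finite.emptyI)

lemma par_sym: "par A x y \<Longrightarrow> par A y x"
  unfolding par_def by blast

lemma impl_in_nodes: "x \<in> impl G \<Longrightarrow> x \<in> nodes G"
  unfolding impl_def by blast

lemma nodes_cases: "x \<in> nodes G \<Longrightarrow> x = zero G \<or> x \<in> impl G \<or> x \<in> maxnodes G"
  unfolding impl_def by blast

lemma maxnodesD: "m \<in> maxnodes G \<Longrightarrow> m \<in> nodes G \<and> \<not> lt G m y"
  unfolding maxnodes_def by blast

section \<open>Comparing sons of two orders\<close>

definition intercepts :: "'a tree \<Rightarrow> 'a \<Rightarrow> 'a set \<Rightarrow> bool" where
  "intercepts A x N \<longleftrightarrow>
     (\<forall>y. lt A x y \<longrightarrow> y \<notin> N \<longrightarrow> (\<exists>s \<in> N. lt A x s \<and> lt A s y))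
   \<and> (\<forall>v s. lt A x v \<longrightarrow> lt A v s \<longrightarrow> v \<notin> N \<longrightarrow> s \<in> N \<longrightarrow> (\<exists>u \<in> N. lt A x u \<and> lt A u s))"

lemma intercepts_nodes: "is_tree A \<Longrightarrow> intercepts A x (nodes A)"
  unfolding intercepts_def using tree_lt_nodes(2) by metis

lemma sons_subset_if_intercepts:
  assumes x: "x \<in> N" and agree: "\<And>u v. u \<in> N \<Longrightarrow> v \<in> N \<Longrightarrow> lt A u v \<longleftrightarrow> lt B u v"
    and iA: "intercepts A x N" and iB: "intercepts B x N"
  shows "sons A x \<subseteq> sons B x"
proof
  fix s assume "s \<in> sons A x"
  then have xs: "lt A x s" and gap: "\<nexists>v. lt A x v \<and> lt A v s" unfolding sons_def by blast+
  have s: "s \<in> N" using xs gap iA unfolding intercepts_def by blast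
  have "\<not> (lt B x v \<and> lt B v s)" for v
  proof (cases "v \<in> N")
    case True
    then show ?thesis using agree[OF x True] agree[OF True s] gap by blast
  next
    case False
    show ?thesis
    proof
      assume "lt B x v \<and> lt B v s"
      then obtain u where "u \<in> N" "lt B x u" "lt B u s"
        using False s iB unfolding intercepts_def by blast
      then show False using agree[OF x \<open>u \<in> N\<close>] agree[OF \<open>u \<in> N\<close> s] gap by blast
    qed
  qed
  then show "s \<in> sons B x" using agree[OF x s] xs unfolding sons_def by blast
qed

lemma sons_eq_if_intercepts:
  assumes "x \<in> N" and "\<And>u v. u \<in> N \<Longrightarrow> v \<in> N \<Longrightarrow> lt A u v \<longleftrightarrow> lt B u v"
    and "intercepts A x N" and "intercepts B x N"
  shows "sons A x = sons B x"
  using sons_subset_if_intercepts[of x N A B] sons_subset_if_intercepts[of x N B A] assms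
  by (metis subset_antisym)

section \<open>Grafts and the support\<close>

locale hybrid =
  fixes T :: "'a tree" and \<gamma> :: "'a tree set"
  assumes tree: "is_tree T" and consistent: "consistent T \<gamma>"
begin

abbreviation "S \<equiv> supp T \<gamma>"
abbreviation "H \<equiv> hybr T \<gamma>"

lemma graft: "G \<in> \<gamma> \<Longrightarrow> graft T G"
  using consistent unfolding consistent_def by blast

lemma graft_tree: "G \<in> \<gamma> \<Longrightarrow> is_tree G"
  using graft unfolding graft_def by blast

lemma graft_least: "G \<in> \<gamma> \<Longrightarrow> is_least G (zero G)"
  using graft tree_zero_eq[OF graft_tree] unfolding graft_def by metis

lemma graft_zero_in_nodes: "G \<in> \<gamma> \<Longrightarrow> zero G \<in> nodes G"
  using graft_least unfolding is_least_def by blast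

lemma graft_zero_lt: "G \<in> \<gamma> \<Longrightarrow> v \<in> nodes G \<Longrightarrow> v \<noteq> zero G \<Longrightarrow> lt G (zero G) v"
  using graft_least unfolding is_least_def le_def by metis

lemma graft_not_lt_zero: "G \<in> \<gamma> \<Longrightarrow> \<not> lt G x (zero G)"
  using graft_zero_lt tree_lt_nodes graft_tree tree_lt_asym tree_lt_irrefl by metis

lemma graft_has_two_nodes: "G \<in> \<gamma> \<Longrightarrow> \<exists>a \<in> nodes G. \<exists>b \<in> nodes G. a \<noteq> b"
  using graft unfolding graft_def by blast

lemma graft_zero_in_T: "G \<in> \<gamma> \<Longrightarrow> zero G \<in> nodes T"
  using graft unfolding graft_def by blast

lemma graft_maxnodes_in_T: "G \<in> \<gamma> \<Longrightarrow> m \<in> maxnodes G \<Longrightarrow> m \<in> nodes T \<and> lt T (zero G) m"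
  using graft unfolding graft_def by blast

lemma graft_maxnodes_antichain:
  "G \<in> \<gamma> \<Longrightarrow> m \<in> maxnodes G \<Longrightarrow> m' \<in> maxnodes G \<Longrightarrow> le T m m' \<Longrightarrow> m = m'"
  using graft unfolding graft_def antichain_def par_def by blast

lemma impl_not_in_T: "G \<in> \<gamma> \<Longrightarrow> x \<in> impl G \<Longrightarrow> x \<notin> nodes T"
  using graft unfolding graft_def by blast

lemma impl_unique: "D \<in> \<gamma> \<Longrightarrow> E \<in> \<gamma> \<Longrightarrow> x \<in> impl D \<Longrightarrow> x \<in> impl E \<Longrightarrow> D = E"
  using consistent unfolding consistent_def by blast

lemma zeros_related: "D \<in> \<gamma> \<Longrightarrow> E \<in> \<gamma> \<Longrightarrow> D \<noteq> E \<Longrightarrow>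
    par T (zero D) (zero E) \<or> zero D \<in> down T (maxnodes E) \<or> zero E \<in> down T (maxnodes D)"
  using consistent unfolding consistent_def by blast

lemma supp_in_T: "x \<in> S \<Longrightarrow> x \<in> nodes T"
  unfolding supp_def by blast

lemma impl_not_in_supp: "G \<in> \<gamma> \<Longrightarrow> x \<in> impl G \<Longrightarrow> x \<notin> S"
  using impl_not_in_T supp_in_T by blast

lemma supp_iff: "x \<in> S \<longleftrightarrow> x \<in> nodes T \<and> (\<forall>G \<in> \<gamma>. lt T (zero G) x \<longrightarrow> x \<in> down T (maxnodes G))"
  unfolding supp_def expl_def by blast

lemma root_eq: "G \<in> \<gamma> \<Longrightarrow> m \<in> maxnodes G \<Longrightarrow> le T m v \<Longrightarrow> root T v (maxnodes G) = m"
  unfolding root_def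
proof (rule the_equality)
  fix r assume "G \<in> \<gamma>" "m \<in> maxnodes G" "le T m v" "r \<in> maxnodes G \<and> le T r v"
  then show "r = m"
    using tree_preds_linear[OF tree] graft_maxnodes_antichain unfolding le_def by metis
qed blast

lemma root_in_maxnodes: "G \<in> \<gamma> \<Longrightarrow> v \<in> down T (maxnodes G) \<Longrightarrow>
    root T v (maxnodes G) \<in> maxnodes G \<and> le T (root T v (maxnodes G)) v"
  unfolding down_def using root_eq by fastforce

lemma root_of_maxnode: "G \<in> \<gamma> \<Longrightarrow> m \<in> maxnodes G \<Longrightarrow> root T m (maxnodes G) = m"
  using root_eq unfolding le_def by blast

lemma zero_lt_if_in_down: "G \<in> \<gamma> \<Longrightarrow> v \<in> down T (maxnodes G) \<Longrightarrow> lt T (zero G) v"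
  unfolding down_def using graft_maxnodes_in_T tree_lt_le_trans[OF tree] by blast

lemma zero_not_in_down: "G \<in> \<gamma> \<Longrightarrow> zero G \<notin> down T (maxnodes G)"
  using zero_lt_if_in_down tree_lt_irrefl[OF tree] by blast

lemma zero_in_down_if_le:
  assumes "D \<in> \<gamma>" "E \<in> \<gamma>" "D \<noteq> E" "le T (zero D) (zero E)"
  shows "zero E \<in> down T (maxnodes D)"
proof -
  have "\<not> par T (zero D) (zero E)" using assms(4) unfolding par_def by blast
  moreover have "zero D \<notin> down T (maxnodes E)"
    using zero_lt_if_in_down[OF assms(2)] assms(4) tree_le_lt_trans[OF tree] tree_lt_irrefl[OF tree]
    by blast
  ultimately show ?thesis using zeros_related assms(1-3) by blast
qed

lemma zero_inj: "D \<in> \<gamma> \<Longrightarrow> E \<in> \<gamma> \<Longrightarrow> zero D = zero E \<Longrightarrow> D = E"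
  using zero_in_down_if_le zero_not_in_down unfolding le_def by metis

lemma zero_in_supp:
  assumes "G \<in> \<gamma>"
  shows "zero G \<in> S"
  unfolding supp_iff
  using assms graft_zero_in_T zero_in_down_if_le tree_lt_irrefl[OF tree] unfolding le_def by metis

lemma maxnodes_in_supp:
  assumes g: "G \<in> \<gamma>" and m: "m \<in> maxnodes G"
  shows "m \<in> S"
proof -
  have Gm: "lt T (zero G) m" and mT: "m \<in> nodes T" using graft_maxnodes_in_T[OF g m] by blast+
  have "m \<in> down T (maxnodes E)" if e: "E \<in> \<gamma>" and Em: "lt T (zero E) m" for E
  proof (cases "E = G")
    case True
    then show ?thesis using m unfolding down_def le_def by blast
  next
    case False
    from tree_preds_linear[OF tree Em Gm] show ?thesis
    proof (elim disjE)
      assume "zero E = zero G"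
      then show ?thesis using zero_inj[OF e g] False by blast
    next
      assume "lt T (zero E) (zero G)"
      then have "zero G \<in> down T (maxnodes E)" using zero_in_down_if_le[OF e g False] unfolding le_def by blast
      then show ?thesis using Gm tree_le_lt_trans[OF tree] unfolding down_def le_def by blast
    next
      assume "lt T (zero G) (zero E)"
      then have "zero E \<in> down T (maxnodes G)"
        using zero_in_down_if_le[OF g e] False unfolding le_def by metis
      then obtain m' where m': "m' \<in> maxnodes G" "le T m' (zero E)" unfolding down_def by blast
      then have "lt T m' m" using Em tree_le_lt_trans[OF tree] by blast
      then show ?thesis using graft_maxnodes_antichain[OF g m'(1) m] tree_lt_irrefl[OF tree]
        unfolding le_def by blast
    qed
  qed
  then show ?thesis unfolding supp_iff using mT by blast
qed

section \<open>The hybrid order\<close>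

lemma nodes_hybr: "nodes H = S \<union> (\<Union>G \<in> \<gamma>. impl G)"
  unfolding hybr_def nodes_def by simp

lemma nodes_hybr_cases: "x \<in> nodes H \<Longrightarrow> x \<in> S \<or> (\<exists>G \<in> \<gamma>. x \<in> impl G)"
  unfolding nodes_hybr by blast

lemma lt_hybr_iff: "lt H x y \<longleftrightarrow>
        (x \<in> S \<and> y \<in> S \<and> lt T x y)
      \<or> (\<exists>G \<in> \<gamma>. x \<in> impl G \<and> y \<in> impl G \<and> lt G x y)
      \<or> (\<exists>G \<in> \<gamma>. x \<in> S \<and> y \<in> impl G \<and> le T x (zero G))
      \<or> (\<exists>G \<in> \<gamma>. x \<in> impl G \<and> y \<in> S \<and> y \<in> down T (maxnodes G)
                \<and> lt G x (root T y (maxnodes G)))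
      \<or> (\<exists>D \<in> \<gamma>. \<exists>E \<in> \<gamma>. D \<noteq> E \<and> x \<in> impl D \<and> y \<in> impl E
                \<and> zero E \<in> down T (maxnodes D) \<and> lt D x (root T (zero E) (maxnodes D)))"
  unfolding hybr_def lt_def by simp

lemma lt_hybr_nodes: "lt H x y \<Longrightarrow> x \<in> nodes H \<and> y \<in> nodes H"
  unfolding lt_hybr_iff nodes_hybr by blast

lemma lt_hybr_supp_supp: "x \<in> S \<Longrightarrow> y \<in> S \<Longrightarrow> lt H x y \<longleftrightarrow> lt T x y"
  unfolding lt_hybr_iff using impl_not_in_supp by blast

lemma lt_hybr_supp_impl:
  assumes "x \<in> S" "G \<in> \<gamma>" "y \<in> impl G"
  shows "lt H x y \<longleftrightarrow> le T x (zero G)"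
proof -
  have "\<forall>G' \<in> \<gamma>. y \<in> impl G' \<longrightarrow> G' = G" "\<forall>G' \<in> \<gamma>. x \<notin> impl G'" "y \<notin> S"
    using assms impl_unique impl_not_in_supp by blast+
  then show ?thesis unfolding lt_hybr_iff using assms by blast
qed

lemma lt_hybr_impl_supp:
  assumes "G \<in> \<gamma>" "x \<in> impl G" "y \<in> S"
  shows "lt H x y \<longleftrightarrow> y \<in> down T (maxnodes G) \<and> lt G x (root T y (maxnodes G))"
proof -
  have "\<forall>G' \<in> \<gamma>. x \<in> impl G' \<longrightarrow> G' = G" "\<forall>G' \<in> \<gamma>. y \<notin> impl G'" "x \<notin> S"
    using assms impl_unique impl_not_in_supp by blast+
  then show ?thesis unfolding lt_hybr_iff using assms by blast
qed

lemma lt_hybr_impl_impl: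
  assumes "G \<in> \<gamma>" "x \<in> impl G" "y \<in> impl G"
  shows "lt H x y \<longleftrightarrow> lt G x y"
proof
  assume "lt H x y"
  moreover have "x \<notin> S" "y \<notin> S" using assms impl_not_in_supp by blast+
  moreover have "\<forall>G' \<in> \<gamma>. x \<in> impl G' \<longrightarrow> G' = G" "\<forall>G' \<in> \<gamma>. y \<in> impl G' \<longrightarrow> G' = G"
    using impl_unique assms by blast+
  ultimately show "lt G x y" unfolding lt_hybr_iff by blast
qed (use assms in \<open>auto simp: lt_hybr_iff\<close>)

lemma lt_hybr_impl_impl_distinct:
  assumes "D \<in> \<gamma>" "E \<in> \<gamma>" "D \<noteq> E" "x \<in> impl D" "y \<in> impl E"
  shows "lt H x y \<longleftrightarrow> zero E \<in> down T (maxnodes D) \<and> lt D x (root T (zero E) (maxnodes D))"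
proof
  assume "lt H x y"
  moreover have "x \<notin> S" "y \<notin> S" using assms impl_not_in_supp by blast+
  moreover have "\<forall>G' \<in> \<gamma>. x \<in> impl G' \<longrightarrow> G' = D" "\<forall>G' \<in> \<gamma>. y \<in> impl G' \<longrightarrow> G' = E"
    using impl_unique assms by blast+
  ultimately show "zero E \<in> down T (maxnodes D) \<and> lt D x (root T (zero E) (maxnodes D))"
    unfolding lt_hybr_iff using assms(3) by blast
qed (use assms in \<open>auto simp: lt_hybr_iff\<close>)

lemma not_lt_hybr_zero:
  assumes g: "G \<in> \<gamma>" and x: "x \<in> nodes G"
  shows "\<not> lt H x (zero G)"
proof
  assume l: "lt H x (zero G)"
  have GS: "zero G \<in> S" using zero_in_supp[OF g] .
  from nodes_cases[OF x] show False
  proof (elim disjE)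
    assume "x = zero G"
    then show False using l lt_hybr_supp_supp[OF GS GS] tree_lt_irrefl[OF tree] by blast
  next
    assume "x \<in> impl G"
    then show False using l lt_hybr_impl_supp[OF g _ GS] zero_not_in_down[OF g] by blast
  next
    assume xm: "x \<in> maxnodes G"
    then have "lt T x (zero G)" using l lt_hybr_supp_supp[OF maxnodes_in_supp[OF g xm] GS] by blast
    then show False using graft_maxnodes_in_T[OF g xm] tree_lt_asym[OF tree] by blast
  qed
qed

lemma not_lt_hybr_from_maxnode:
  assumes g: "G \<in> \<gamma>" and m: "m \<in> maxnodes G" and y: "y \<in> nodes G"
  shows "\<not> lt H m y"
proof
  assume l: "lt H m y"
  have mS: "m \<in> S" and Gm: "lt T (zero G) m"
    using maxnodes_in_supp[OF g m] graft_maxnodes_in_T[OF g m] by blast+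
  from nodes_cases[OF y] show False
  proof (elim disjE)
    assume "y = zero G"
    then show False using l not_lt_hybr_zero[OF g] maxnodesD[OF m] by blast
  next
    assume "y \<in> impl G"
    then have "le T m (zero G)" using l lt_hybr_supp_impl[OF mS g] by blast
    then show False using Gm tree_le_lt_trans[OF tree] tree_lt_irrefl[OF tree] by blast
  next
    assume ym: "y \<in> maxnodes G"
    then have "lt T m y" using l lt_hybr_supp_supp[OF mS maxnodes_in_supp[OF g ym]] by blast
    then show False using graft_maxnodes_antichain[OF g m ym] tree_lt_irrefl[OF tree]
      unfolding le_def by blast
  qed
qed

lemma lt_hybr_graft_iff:
  assumes g: "G \<in> \<gamma>" and x: "x \<in> nodes G" and y: "y \<in> nodes G"
  shows "lt H x y \<longleftrightarrow> lt G x y"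
proof (cases "x \<in> maxnodes G \<or> y = zero G")
  case True
  then have "\<not> lt H x y \<and> \<not> lt G x y"
    using not_lt_hybr_from_maxnode[OF g _ y] not_lt_hybr_zero[OF g x] maxnodesD[of x G]
      graft_not_lt_zero[OF g, of x] by blast
  then show ?thesis by blast
next
  case False
  then have x': "x = zero G \<or> x \<in> impl G" and y': "y \<in> impl G \<or> y \<in> maxnodes G"
    using nodes_cases[OF x] nodes_cases[OF y] by blast+
  have GS: "zero G \<in> S" using zero_in_supp[OF g] .
  have Gy: "lt G (zero G) y" using graft_zero_lt[OF g y] False by blast
  from x' y' show ?thesis
  proof (elim disjE)
    assume "x = zero G" "y \<in> impl G"
    then show ?thesis using Gy lt_hybr_supp_impl[OF GS g] unfolding le_def by blast
  next
    assume "x = zero G" "y \<in> maxnodes G"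
    then show ?thesis
      using Gy lt_hybr_supp_supp[OF GS maxnodes_in_supp[OF g]] graft_maxnodes_in_T[OF g] by blast
  next
    assume "x \<in> impl G" "y \<in> impl G"
    then show ?thesis using lt_hybr_impl_impl[OF g] by blast
  next
    assume xi: "x \<in> impl G" and ym: "y \<in> maxnodes G"
    have "y \<in> down T (maxnodes G)" using ym unfolding down_def le_def by blast
    then show ?thesis
      using lt_hybr_impl_supp[OF g xi maxnodes_in_supp[OF g ym]] root_of_maxnode[OF g ym] by simp
  qed
qed

section \<open>Sons in the hybrid\<close>

lemma graft_exit:
  assumes g: "G \<in> \<gamma>" and x: "x = zero G \<or> x \<in> impl G" and xy: "lt H x y" and y: "y \<notin> nodes G"
  shows "\<exists>m \<in> maxnodes G. lt G x m \<and> lt H m y"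
proof -
  have GS: "zero G \<in> S" using zero_in_supp[OF g] .
  \<comment> \<open>\<open>p\<close> is \<open>y\<close> itself, or the root of the graft whose implant contains \<open>y\<close>.\<close>
  have "\<exists>p. p \<in> down T (maxnodes G) \<and> (x \<in> impl G \<longrightarrow> lt G x (root T p (maxnodes G)))
           \<and> (\<forall>m \<in> maxnodes G. le T m p \<longrightarrow> lt H m y)"
  proof -
    from lt_hybr_nodes[OF xy] nodes_hybr_cases consider "y \<in> S" | E where "E \<in> \<gamma>" "y \<in> impl E"
      by blast
    then show ?thesis
    proof cases
      case yS: 1
      have "y \<in> down T (maxnodes G) \<and> (x \<in> impl G \<longrightarrow> lt G x (root T y (maxnodes G)))"
      proof (cases "x = zero G")
        case True
        then show ?thesis using xy lt_hybr_supp_supp[OF GS yS] yS g impl_not_in_supp[OF g] GS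
          unfolding supp_iff by blast
      next
        case False
        then show ?thesis using x xy lt_hybr_impl_supp[OF g _ yS] by blast
      qed
      moreover have "lt H m y" if "m \<in> maxnodes G" "le T m y" for m
      proof -
        have "m \<noteq> y" using maxnodesD[OF that(1)] y by blast
        then show ?thesis using that lt_hybr_supp_supp[OF maxnodes_in_supp[OF g that(1)] yS]
          unfolding le_def by blast
      qed
      ultimately show ?thesis by blast
    next
      case (2 E)
      have ne: "G \<noteq> E" using y 2 impl_in_nodes by metis
      have "zero E \<in> down T (maxnodes G) \<and> (x \<in> impl G \<longrightarrow> lt G x (root T (zero E) (maxnodes G)))"
      proof (cases "x = zero G")
        case True
        then show ?thesis using xy lt_hybr_supp_impl[OF GS 2] zero_in_down_if_le[OF g 2(1) ne]
          impl_not_in_supp[OF g] GS by blast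
      next
        case False
        then show ?thesis using x xy lt_hybr_impl_impl_distinct[OF g 2(1) ne _ 2(2)] by blast
      qed
      moreover have "lt H m y" if "m \<in> maxnodes G" "le T m (zero E)" for m
        using that lt_hybr_supp_impl[OF maxnodes_in_supp[OF g] 2] by blast
      ultimately show ?thesis by blast
    qed
  qed
  then obtain p where p: "p \<in> down T (maxnodes G)" "x \<in> impl G \<longrightarrow> lt G x (root T p (maxnodes G))"
      "\<forall>m \<in> maxnodes G. le T m p \<longrightarrow> lt H m y" by blast
  define m where "m = root T p (maxnodes G)"
  have m: "m \<in> maxnodes G" "le T m p" using root_in_maxnodes[OF g p(1)] unfolding m_def by blast+
  have "lt G x m"
  proof (cases "x = zero G")
    case True
    then show ?thesis using graft_zero_lt[OF g] maxnodesD[OF m(1)] graft_maxnodes_in_T[OF g m(1)]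
      tree_lt_irrefl[OF tree] by metis
  next
    case False
    then show ?thesis using x p(2) unfolding m_def by blast
  qed
  then show ?thesis using m p(3) by blast
qed

text \<open>Read in \<open>T\<close>, such a path would put \<open>m\<close> strictly below the root or a maximal
  node of \<open>G\<close>.\<close>
lemma no_return_to_graft:
  assumes g: "G \<in> \<gamma>" and m: "m \<in> maxnodes G" and mv: "lt H m v" and vs: "lt H v s"
    and v: "v \<notin> nodes G" and s: "s \<in> nodes G"
  shows False
proof -
  have mS: "m \<in> S" using maxnodes_in_supp[OF g m] .
  have "\<exists>q. (q = zero G \<or> q \<in> maxnodes G) \<and> lt T m q"
  proof -
    obtain q where q: "q = zero G \<or> q \<in> maxnodes G" and qS: "q \<in> S"
      and sq: "(s \<in> S \<and> q = s) \<or> (s \<in> impl G \<and> q = zero G)"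
      using nodes_cases[OF s] zero_in_supp[OF g] maxnodes_in_supp[OF g] by blast
    from lt_hybr_nodes[OF mv] nodes_hybr_cases consider "v \<in> S" | E where "E \<in> \<gamma>" "v \<in> impl E"
      by blast
    then have "lt T m q"
    proof cases
      case vS: 1
      have "le T v q"
        using sq vs lt_hybr_supp_supp[OF vS] lt_hybr_supp_impl[OF vS g] unfolding le_def by blast
      then show ?thesis using mv lt_hybr_supp_supp[OF mS vS] tree_lt_le_trans[OF tree] by blast
    next
      case (2 E)
      have ne: "E \<noteq> G" using v 2 impl_in_nodes by metis
      have "q \<in> down T (maxnodes E)"
        using sq vs lt_hybr_impl_supp[OF 2] lt_hybr_impl_impl_distinct[OF 2(1) g ne 2(2)] by blast
      then have "lt T (zero E) q" using zero_lt_if_in_down[OF 2(1)] by blast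
      moreover have "le T m (zero E)" using mv lt_hybr_supp_impl[OF mS 2] by blast
      ultimately show ?thesis using tree_le_lt_trans[OF tree] by blast
    qed
    then show ?thesis using q by blast
  qed
  then obtain q where "q = zero G \<or> q \<in> maxnodes G" "lt T m q" by blast
  then show False
    using graft_maxnodes_in_T[OF g m] tree_lt_asym[OF tree] graft_maxnodes_antichain[OF g m]
      tree_lt_irrefl[OF tree] unfolding le_def by blast
qed

lemma intercepts_hybr_graft:
  assumes g: "G \<in> \<gamma>" and x: "x = zero G \<or> x \<in> impl G"
  shows "intercepts H x (nodes G)"
proof -
  have xG: "x \<in> nodes G" using x graft_zero_in_nodes[OF g] impl_in_nodes by metis
  have "\<exists>s \<in> nodes G. lt H x s \<and> lt H s y" if "lt H x y" "y \<notin> nodes G" for y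
    using graft_exit[OF g x that] lt_hybr_graft_iff[OF g xG] maxnodesD by meson
  moreover have False if "lt H x v" "lt H v s" "v \<notin> nodes G" "s \<in> nodes G" for v s
    using graft_exit[OF g x that(1,3)] no_return_to_graft[OF g _ _ that(2-4)] by blast
  ultimately show ?thesis unfolding intercepts_def by blast
qed

lemma sons_hybr_graft:
  assumes g: "G \<in> \<gamma>" and x: "x = zero G \<or> x \<in> impl G"
  shows "sons H x = sons G x"
proof (rule sons_eq_if_intercepts)
  show "x \<in> nodes G" using x graft_zero_in_nodes[OF g] impl_in_nodes by metis
  show "lt H u v \<longleftrightarrow> lt G u v" if "u \<in> nodes G" "v \<in> nodes G" for u v
    using lt_hybr_graft_iff[OF g that] .
  show "intercepts H x (nodes G)" using intercepts_hybr_graft[OF g x] .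
  show "intercepts G x (nodes G)" using intercepts_nodes[OF graft_tree[OF g]] .
qed

lemma down_upward_closed: "u \<in> down T A \<Longrightarrow> lt T u v \<Longrightarrow> v \<in> down T A"
  unfolding down_def le_def using tree_lt_trans[OF tree] by blast

lemma supp_exit:
  assumes xS: "x \<in> S" and nz: "\<forall>G \<in> \<gamma>. x \<noteq> zero G" and xv: "lt T x v" and v: "v \<notin> S"
  shows "\<exists>G \<in> \<gamma>. lt T x (zero G) \<and> lt T (zero G) v"
proof -
  obtain G where g: "G \<in> \<gamma>" and Gv: "lt T (zero G) v" and vG: "v \<notin> down T (maxnodes G)"
    using v tree_lt_nodes(2)[OF tree xv] unfolding supp_iff by blast
  from tree_preds_linear[OF tree Gv xv] consider "zero G = x" | "lt T (zero G) x" | "lt T x (zero G)"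
    by blast
  then show ?thesis
  proof cases
    case 1
    then show ?thesis using nz g by blast
  next
    case 2
    then show ?thesis using xS g xv vG down_upward_closed unfolding supp_iff by blast
  next
    case 3
    then show ?thesis using g Gv by blast
  qed
qed

lemma hybr_supp_exit:
  assumes xS: "x \<in> S" and nz: "\<forall>G \<in> \<gamma>. x \<noteq> zero G" and xv: "lt H x v" and v: "v \<notin> S"
  shows "\<exists>G \<in> \<gamma>. v \<in> impl G \<and> lt T x (zero G)"
proof -
  obtain G where g: "G \<in> \<gamma>" and vG: "v \<in> impl G"
    using v nodes_hybr_cases lt_hybr_nodes[OF xv] by blast
  then have "le T x (zero G)" using xv lt_hybr_supp_impl[OF xS] by blast
  then show ?thesis using nz g vG unfolding le_def by blast
qed

lemma intercepts_hybr_supp: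
  assumes xS: "x \<in> S" and nz: "\<forall>G \<in> \<gamma>. x \<noteq> zero G"
  shows "intercepts H x S"
proof -
  have "\<exists>s \<in> S. lt H x s \<and> lt H s y" if xy: "lt H x y" "y \<notin> S" for y
  proof -
    obtain G where "G \<in> \<gamma>" "y \<in> impl G" "lt T x (zero G)"
      using hybr_supp_exit[OF xS nz xy] by blast
    then show ?thesis
      using zero_in_supp lt_hybr_supp_supp[OF xS] lt_hybr_supp_impl unfolding le_def by blast
  qed
  moreover have "\<exists>u \<in> S. lt H x u \<and> lt H u s" if path: "lt H x v" "lt H v s" "v \<notin> S" "s \<in> S" for v s
  proof -
    obtain G where g: "G \<in> \<gamma>" and vG: "v \<in> impl G" and xG: "lt T x (zero G)"
      using hybr_supp_exit[OF xS nz path(1,3)] by blast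
    have "lt T (zero G) s"
      using path(2) lt_hybr_impl_supp[OF g vG path(4)] zero_lt_if_in_down[OF g] by blast
    then show ?thesis
      using xG zero_in_supp[OF g] lt_hybr_supp_supp[OF xS] lt_hybr_supp_supp[OF _ path(4)] by blast
  qed
  ultimately show ?thesis unfolding intercepts_def by blast
qed

lemma intercepts_supp:
  assumes xS: "x \<in> S" and nz: "\<forall>G \<in> \<gamma>. x \<noteq> zero G"
  shows "intercepts T x S"
  unfolding intercepts_def
  using supp_exit[OF xS nz] zero_in_supp tree_lt_trans[OF tree] by meson

lemma sons_hybr_supp:
  assumes xS: "x \<in> S" and nz: "\<forall>G \<in> \<gamma>. x \<noteq> zero G"
  shows "sons H x = sons T x"
proof (rule sons_eq_if_intercepts)
  show "lt H u v \<longleftrightarrow> lt T u v" if "u \<in> S" "v \<in> S" for u v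
    using lt_hybr_supp_supp[OF that] .
qed (fact xS intercepts_hybr_supp[OF xS nz] intercepts_supp[OF xS nz])+

section \<open>Incomparable nodes\<close>

definition par_below :: "'a \<Rightarrow> 'a \<Rightarrow> bool" where
  "par_below x y \<longleftrightarrow> (\<exists>x' y'. le H x' x \<and> le H y' y \<and>
     ((x' \<in> S \<and> y' \<in> S \<and> par T x' y') \<or> (\<exists>G \<in> \<gamma>. x' \<in> nodes G \<and> y' \<in> nodes G \<and> par G x' y')))"

lemma par_below_sym:
  assumes "par_below x y"
  shows "par_below y x"
proof -
  obtain a b where ab: "le H a x" "le H b y"
    and "(a \<in> S \<and> b \<in> S \<and> par T a b) \<or> (\<exists>G \<in> \<gamma>. a \<in> nodes G \<and> b \<in> nodes G \<and> par G a b)"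
    using assms unfolding par_below_def by blast
  then consider "a \<in> S" "b \<in> S" "par T b a" | G where "G \<in> \<gamma>" "a \<in> nodes G" "b \<in> nodes G" "par G b a"
    using par_sym[of T a b] par_sym[of _ a b] by blast
  then show ?thesis unfolding par_below_def using ab by cases blast+
qed

lemma par_below_supp: "le H a x \<Longrightarrow> le H b y \<Longrightarrow> a \<in> S \<Longrightarrow> b \<in> S \<Longrightarrow> par T a b \<Longrightarrow> par_below x y"
  unfolding par_below_def by blast

lemma par_below_graft:
  "le H a x \<Longrightarrow> le H b y \<Longrightarrow> G \<in> \<gamma> \<Longrightarrow> a \<in> nodes G \<Longrightarrow> b \<in> nodes G \<Longrightarrow> par G a b \<Longrightarrow> par_below x y"
  unfolding par_below_def by blast

lemma par_impl_maxnode: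
  assumes g: "G \<in> \<gamma>" and x: "x \<in> impl G" and m: "m \<in> maxnodes G" and xm: "\<not> lt G x m"
  shows "par G x m"
proof -
  have "x \<noteq> m" using impl_not_in_T[OF g x] graft_maxnodes_in_T[OF g m] by blast
  then show ?thesis using xm maxnodesD[OF m] impl_in_nodes[OF x] unfolding par_def le_def by blast
qed

lemma par_below_impl_supp:
  assumes g: "G \<in> \<gamma>" and x: "x \<in> impl G" and yS: "y \<in> S" and xy: "par H x y"
  shows "par_below x y"
proof (cases "y \<in> down T (maxnodes G)")
  case True
  define m where "m = root T y (maxnodes G)"
  have m: "m \<in> maxnodes G" "le T m y" using root_in_maxnodes[OF g True] unfolding m_def by blast+
  have "\<not> lt G x m" using xy lt_hybr_impl_supp[OF g x yS] True unfolding m_def par_def le_def by blast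
  then have "par G x m" using par_impl_maxnode[OF g x m(1)] by blast
  moreover have "le H m y" using m(2) lt_hybr_supp_supp[OF maxnodes_in_supp[OF g m(1)] yS]
    unfolding le_def by blast
  ultimately show ?thesis
    using par_below_graft[of x x] g impl_in_nodes[OF x] maxnodesD[OF m(1)] unfolding le_def by blast
next
  case False
  have GS: "zero G \<in> S" using zero_in_supp[OF g] .
  have "\<not> le T y (zero G)" using xy lt_hybr_supp_impl[OF yS g x] unfolding par_def le_def by blast
  moreover have "\<not> lt T (zero G) y" using False yS g unfolding supp_iff by blast
  ultimately have "par T (zero G) y"
    using supp_in_T[OF yS] graft_zero_in_T[OF g] unfolding par_def le_def by blast
  moreover have "le H (zero G) x" using lt_hybr_supp_impl[OF GS g x] unfolding le_def by blast
  ultimately show ?thesis using par_below_supp[OF _ _ GS yS] unfolding le_def by blast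
qed

lemma par_below_impl_impl:
  assumes d: "D \<in> \<gamma>" and e: "E \<in> \<gamma>" and x: "x \<in> impl D" and y: "y \<in> impl E" and xy: "par H x y"
  shows "par_below x y"
proof (cases "D = E")
  case True
  then have y': "y \<in> impl D" using y by simp
  have "\<not> lt D x y" "\<not> lt D y x" "x \<noteq> y"
    using xy lt_hybr_impl_impl[OF d x y'] lt_hybr_impl_impl[OF d y' x] unfolding par_def le_def by blast+
  then have "par D x y"
    using impl_in_nodes[OF x] impl_in_nodes[OF y'] unfolding par_def le_def by blast
  then show ?thesis
    using par_below_graft[of x x y y D] d impl_in_nodes[OF x] impl_in_nodes[OF y'] unfolding le_def by blast
next
  case ne: False
  have zS: "zero D \<in> S" "zero E \<in> S" using zero_in_supp d e by blast+
  have below: "le H (zero D) x" "le H (zero E) y"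
    using lt_hybr_supp_impl[OF zS(1) d x] lt_hybr_supp_impl[OF zS(2) e y] unfolding le_def by blast+
  have cross: "par_below u v"
    if a: "A \<in> \<gamma>" "B \<in> \<gamma>" "A \<noteq> B" "u \<in> impl A" "v \<in> impl B" "par H u v"
      and down: "zero B \<in> down T (maxnodes A)" for A B u v
  proof -
    define m where "m = root T (zero B) (maxnodes A)"
    have m: "m \<in> maxnodes A" "le T m (zero B)" using root_in_maxnodes[OF a(1) down] unfolding m_def by blast+
    have "\<not> lt A u m" using a(6) lt_hybr_impl_impl_distinct[OF a(1-5)] down unfolding m_def par_def le_def
      by blast
    then have "par A u m" using par_impl_maxnode[OF a(1,4) m(1)] by blast
    moreover have "le H m v" using lt_hybr_supp_impl[OF maxnodes_in_supp[OF a(1) m(1)] a(2,5)] m(2)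
      unfolding le_def by blast
    ultimately show ?thesis
      using par_below_graft[of u u] a(1) impl_in_nodes[OF a(4)] maxnodesD[OF m(1)] unfolding le_def by blast
  qed
  from zeros_related[OF d e ne] show ?thesis
  proof (elim disjE)
    assume "par T (zero D) (zero E)"
    then show ?thesis using par_below_supp[OF below zS] by blast
  next
    assume "zero D \<in> down T (maxnodes E)"
    then show ?thesis using cross[OF e d _ y x] ne par_sym[OF xy] par_below_sym by blast
  next
    assume "zero E \<in> down T (maxnodes D)"
    then show ?thesis using cross[OF d e ne x y xy] by blast
  qed
qed

lemma par_hybr_par_below:
  assumes xy: "par H x y"
  shows "par_below x y"
proof -
  have "x \<in> nodes H" "y \<in> nodes H" using xy unfolding par_def by blast+
  then consider "x \<in> S" "y \<in> S" | G where "G \<in> \<gamma>" "x \<in> impl G" "y \<in> S"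
    | G where "G \<in> \<gamma>" "x \<in> S" "y \<in> impl G" | D E where "D \<in> \<gamma>" "E \<in> \<gamma>" "x \<in> impl D" "y \<in> impl E"
    using nodes_hybr_cases by metis
  then show ?thesis
  proof cases
    case 1
    then have "par T x y"
      using xy lt_hybr_supp_supp supp_in_T unfolding par_def le_def by blast
    then show ?thesis using par_below_supp 1 unfolding le_def by blast
  next
    case 2
    then show ?thesis using par_below_impl_supp xy by blast
  next
    case 3
    then show ?thesis using par_below_impl_supp par_sym[OF xy] par_below_sym by blast
  next
    case 4
    then show ?thesis using par_below_impl_impl xy by blast
  qed
qed

section \<open>Least node, maximal nodes, branching and height\<close>

lemma least_hybr:
  assumes z: "is_least T z"
  shows "z \<in> S" and "is_least H z" and "zero H = z"
proof -
  have zT: "z \<in> nodes T" and zle: "\<And>v. v \<in> nodes T \<Longrightarrow> le T z v"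
    using z unfolding is_least_def by blast+
  have not_below_root: "\<not> lt T (zero G) z" if "G \<in> \<gamma>" for G
    using tree_not_lt_least[OF tree z] .
  show zS: "z \<in> S" using zT not_below_root unfolding supp_iff by blast
  have "le H z v" if "v \<in> nodes H" for v
    using nodes_hybr_cases[OF that] zle supp_in_T lt_hybr_supp_supp[OF zS] graft_zero_in_T
      lt_hybr_supp_impl[OF zS] unfolding le_def by metis
  then show least: "is_least H z" using zS unfolding is_least_def nodes_hybr by blast
  have "\<not> lt H v z" for v
  proof
    assume vz: "lt H v z"
    from lt_hybr_nodes[OF vz] nodes_hybr_cases consider "v \<in> S" | G where "G \<in> \<gamma>" "v \<in> impl G"
      by blast
    then show False
    proof cases
      case 1
      then show False using vz lt_hybr_supp_supp[OF _ zS] tree_not_lt_least[OF tree z] by blast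
    next
      case 2
      then show False using vz lt_hybr_impl_supp[OF _ _ zS] zero_lt_if_in_down not_below_root by blast
    qed
  qed
  then show "zero H = z" using zero_eqI[OF least] by blast
qed

lemma graft_zero_impl_not_maximal:
  assumes g: "G \<in> \<gamma>" and x: "x = zero G \<or> x \<in> impl G"
  shows "x \<in> nodes G - maxnodes G"
proof -
  obtain v where "v \<in> nodes G" "v \<noteq> zero G" using graft_has_two_nodes[OF g] by metis
  then have "lt G (zero G) v" using graft_zero_lt[OF g] by blast
  then show ?thesis
    using x graft_zero_in_nodes[OF g] unfolding impl_def maxnodes_def by blast
qed

lemma maxnodes_hybr_empty:
  assumes T: "maxnodes T = {}"
  shows "maxnodes H = {}"
proof -
  have "\<exists>y. lt H x y" if xH: "x \<in> nodes H" for x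
  proof (cases "\<exists>G \<in> \<gamma>. x = zero G \<or> x \<in> impl G")
    case True
    then obtain G where g: "G \<in> \<gamma>" and x: "x = zero G \<or> x \<in> impl G" by blast
    then have "x \<in> nodes G - maxnodes G" using graft_zero_impl_not_maximal by blast
    then obtain v where "lt G x v" unfolding maxnodes_def by blast
    then show ?thesis using lt_hybr_graft_iff[OF g] tree_lt_nodes[OF graft_tree[OF g]] by blast
  next
    case False
    then have xS: "x \<in> S" and nz: "\<forall>G \<in> \<gamma>. x \<noteq> zero G" using nodes_hybr_cases[OF xH] by blast+
    obtain y where xy: "lt T x y" using T supp_in_T[OF xS] unfolding maxnodes_def by blast
    show ?thesis
    proof (cases "y \<in> S")
      case True
      then show ?thesis using xy lt_hybr_supp_supp[OF xS] by blast
    next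
      case False
      then show ?thesis using supp_exit[OF xS nz xy] zero_in_supp lt_hybr_supp_supp[OF xS] by blast
    qed
  qed
  then show ?thesis unfolding maxnodes_def by blast
qed

lemma branching_hybr:
  assumes T: "branching T K" and grafts: "\<forall>G \<in> \<gamma>. branching G K"
  shows "branching H K"
  unfolding branching_def
proof
  fix x assume "x \<in> nodes H - maxnodes H"
  then have xH: "x \<in> nodes H" and xy: "\<exists>y. lt H x y" unfolding maxnodes_def by blast+
  show "sons H x \<approx> K"
  proof (cases "\<exists>G \<in> \<gamma>. x = zero G \<or> x \<in> impl G")
    case True
    then obtain G where g: "G \<in> \<gamma>" and x: "x = zero G \<or> x \<in> impl G" by blast
    then show ?thesis using sons_hybr_graft graft_zero_impl_not_maximal grafts
      unfolding branching_def by metis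
  next
    case False
    then have xS: "x \<in> S" and nz: "\<forall>G \<in> \<gamma>. x \<noteq> zero G" using nodes_hybr_cases[OF xH] by blast+
    have "\<exists>y. lt T x y"
      using xy lt_hybr_supp_supp[OF xS] hybr_supp_exit[OF xS nz] by blast
    then have "x \<in> nodes T - maxnodes T" using supp_in_T[OF xS] unfolding maxnodes_def by blast
    then show ?thesis using T sons_hybr_supp[OF xS nz] unfolding branching_def by simp
  qed
qed

lemma finite_grafts_rooted_in: "finite F \<Longrightarrow> finite {G \<in> \<gamma>. zero G \<in> F}"
  using finite_vimage_IntI[of F zero \<gamma>] zero_inj unfolding inj_on_def vimage_def
  by (simp add: Int_def conj_commute)

lemma height_hybr:
  assumes T: "height_le_omega T" and grafts: "\<forall>G \<in> \<gamma>. height_le_omega G"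
  shows "height_le_omega H"
  unfolding height_le_omega_def
proof
  define U where "U w = (\<Union>D \<in> {D \<in> \<gamma>. zero D \<in> preds T w}. preds D (root T w (maxnodes D)))" for w
  have fin_T: "finite (preds T w)" for w using finite_preds[OF tree T] .
  have fin_U: "finite (U w)" for w
    unfolding U_def using finite_grafts_rooted_in[OF fin_T] finite_preds[OF graft_tree] grafts
    by (intro finite_UN_I) auto
  fix x assume "x \<in> nodes H"
  then consider "x \<in> S" | G where "G \<in> \<gamma>" "x \<in> impl G" using nodes_hybr_cases by blast
  then show "finite (preds H x)"
  proof cases
    case xS: 1
    have "preds H x \<subseteq> preds T x \<union> U x"
    proof
      fix v assume "v \<in> preds H x"
      then have vx: "lt H v x" unfolding preds_def by blast
      from lt_hybr_nodes[OF vx] nodes_hybr_cases consider "v \<in> S" | G where "G \<in> \<gamma>" "v \<in> impl G"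
        by blast
      then show "v \<in> preds T x \<union> U x"
      proof cases
        case 1
        then show ?thesis using vx lt_hybr_supp_supp[OF _ xS] unfolding preds_def by blast
      next
        case (2 G)
        then show ?thesis using vx lt_hybr_impl_supp[OF 2 xS] zero_lt_if_in_down[OF 2(1)]
          unfolding U_def preds_def by blast
      qed
    qed
    then show ?thesis using fin_T fin_U finite_subset by blast
  next
    case (2 G)
    have "preds H x \<subseteq> insert (zero G) (preds T (zero G)) \<union> preds G x \<union> U (zero G)"
    proof
      fix v assume "v \<in> preds H x"
      then have vx: "lt H v x" unfolding preds_def by blast
      from lt_hybr_nodes[OF vx] nodes_hybr_cases consider "v \<in> S" | D where "D \<in> \<gamma>" "v \<in> impl D"
        by blast
      then show "v \<in> insert (zero G) (preds T (zero G)) \<union> preds G x \<union> U (zero G)"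
      proof cases
        case 1
        then show ?thesis using vx lt_hybr_supp_impl[OF _ 2] unfolding preds_def le_def by blast
      next
        case (2 D)
        show ?thesis
        proof (cases "D = G")
          case True
          then show ?thesis using vx lt_hybr_impl_impl \<open>G \<in> \<gamma>\<close> \<open>x \<in> impl G\<close> 2(2)
            unfolding preds_def by blast
        next
          case False
          then have "zero D \<in> preds T (zero G)" "v \<in> preds D (root T (zero G) (maxnodes D))"
            using vx lt_hybr_impl_impl_distinct[OF 2(1) \<open>G \<in> \<gamma>\<close> False 2(2) \<open>x \<in> impl G\<close>]
              zero_lt_if_in_down[OF 2(1)] unfolding preds_def by blast+
          then show ?thesis using 2(1) unfolding U_def by blast
        qed
      qed
    qed
    then show ?thesis
      using fin_T fin_U finite_preds[OF graft_tree] grafts 2(1) finite_subset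
      by (metis finite_Un finite_insert)
  qed
qed

end

theorem mainTheorem8:
  fixes T :: "'a tree" and \<gamma> :: "'a tree set" and K :: "'k set"
  assumes "is_tree T" and "consistent T \<gamma>"
  defines "H \<equiv> hybr T \<gamma>"
  shows "(\<forall>x \<in> nodes H.
            (\<forall>G \<in> \<gamma>. (x = zero G \<or> x \<in> impl G) \<longrightarrow> sons H x = sons G x)
          \<and> ((\<forall>G \<in> \<gamma>. x \<noteq> zero G \<and> x \<notin> impl G) \<longrightarrow> sons H x = sons T x))
     \<and> (\<forall>x y. par H x y \<longrightarrow>
          (\<exists>x' y'. le H x' x \<and> le H y' y \<and>
             ((x' \<in> supp T \<gamma> \<and> y' \<in> supp T \<gamma> \<and> par T x' y')
              \<or> (\<exists>G \<in> \<gamma>. x' \<in> nodes G \<and> y' \<in> nodes G \<and> par G x' y'))))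
     \<and> ((\<exists>z. is_least T z) \<longrightarrow>
          (\<exists>z. is_least H z) \<and> zero H = zero T \<and> zero H \<in> supp T \<gamma>)
     \<and> (maxnodes T = {} \<longrightarrow> maxnodes H = {})
     \<and> (branching T K \<and> (\<forall>G \<in> \<gamma>. branching G K) \<longrightarrow> branching H K)
     \<and> (height_le_omega T \<and> (\<forall>G \<in> \<gamma>. height_le_omega G) \<longrightarrow> height_le_omega H)"
proof -
  interpret hybrid T \<gamma> using assms(1,2) by (rule hybrid.intro)
  have sons: "sons H x = sons G x" if "G \<in> \<gamma>" "x = zero G \<or> x \<in> impl G" for x G
    using sons_hybr_graft[OF that] unfolding H_def .
  have sons_supp: "sons H x = sons T x" if "x \<in> nodes H" "\<forall>G \<in> \<gamma>. x \<noteq> zero G \<and> x \<notin> impl G" for x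
    using that nodes_hybr_cases sons_hybr_supp unfolding H_def by blast
  have least: "(\<exists>z. is_least H z) \<and> zero H = zero T \<and> zero H \<in> supp T \<gamma>" if "is_least T z" for z
    using least_hybr[OF that] tree_zero_eq[OF assms(1) that] unfolding H_def by auto
  have par: "par_below x y" if "par H x y" for x y
    using par_hybr_par_below that unfolding H_def .
  show ?thesis
    using sons sons_supp least par maxnodes_hybr_empty branching_hybr height_hybr
    unfolding par_below_def H_def[symmetric] by meson
qed

end
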